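(* There are absolute constants $c,C>0$ such that for every integer $k\ge2$ and infinitely many $n$, there is a $k$-monotone sequence $S_k\in[n]^n$ (of length $n$) with $\mathsf{F}^{k-1}(S_k)\ge c\,\frac{n}{k}\log(n/k)$ and $\mathsf{F}^{k}(S_k)\le C\,n$.
   Context: $\log(x)=\log_2(\max\{2,x\})$. A sequence $X\in[n]^m$ is $k$-monotone if it can be partitioned into $k$ (not necessarily contiguous) subsequences that are all increasing or all decreasing. $k$-finger cost: for a static BST $T$ on $[n]$, $d_T(a,b)$ is the number of edges between $a$ and $b$ in $T$. A $k$-finger strategy is an initial vector $\vec\ell\in[n]^k$ and $\vec f\in[k]^m$, finger $f_t$ serving $x_t$, with cost $\sum_{t=1}^m(1+d_T(x_t,p_t))$ where $p_t$ is the position of finger $f_t$ before time $t$ (its last served key, or $\ell_{f_t}$). $\mathsf{F}^k_T(X)$ is the minimum such cost and $\mathsf{F}^k(X)=\min_T\mathsf{F}^k_T(X)$ over BSTs $T$ on $[n]$. *)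

theory Defs
  imports Complex_Main "HOL-Library.Tree"
begin

definition lg :: "real \<Rightarrow> real" where
  "lg x = log 2 (max 2 x)"

definition bst_on :: "nat \<Rightarrow> nat tree \<Rightarrow> bool" where
  "bst_on n T \<longleftrightarrow> inorder T = [1..<n+1]"

fun spath :: "nat tree \<Rightarrow> nat \<Rightarrow> nat list" where
  "spath Leaf x = []"
| "spath (Node l a r) x = a # (if x < a then spath l x else if a < x then spath r x else [])"

fun lcp_len :: "nat list \<Rightarrow> nat list \<Rightarrow> nat" where
  "lcp_len (a # as) (b # bs) = (if a = b then Suc (lcp_len as bs) else 0)"
| "lcp_len _ _ = 0"

text \<open>d_T(a,b): number of edges on the tree path between keys a and b,
  i.e. depth a + depth b - 2 depth(lca a b).\<close>
definition dist_T :: "nat tree \<Rightarrow> nat \<Rightarrow> nat \<Rightarrow> nat" where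
  "dist_T T a b = length (spath T a) + length (spath T b) - 2 * lcp_len (spath T a) (spath T b)"

text \<open>Cost of a finger strategy: pos i is the current position of finger i
  (initially l i, afterwards its last served key); fs lists the finger serving each access.\<close>
fun finger_cost :: "nat tree \<Rightarrow> (nat \<Rightarrow> nat) \<Rightarrow> nat list \<Rightarrow> nat list \<Rightarrow> nat" where
  "finger_cost T pos (x # xs) (j # fs) = 1 + dist_T T x (pos j) + finger_cost T (pos(j := x)) xs fs"
| "finger_cost T pos _ _ = 0"

definition finger_T :: "nat \<Rightarrow> nat \<Rightarrow> nat tree \<Rightarrow> nat list \<Rightarrow> nat" where
  "finger_T k n T X = Inf {finger_cost T l X f | l f.
      (\<forall>i<k. l i \<in> {1..n}) \<and> length f = length X \<and> set f \<subseteq> {..<k}}"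

definition finger :: "nat \<Rightarrow> nat \<Rightarrow> nat list \<Rightarrow> nat" where
  "finger k n X = Inf {finger_T k n T X | T. bst_on n T}"

definition k_monotone :: "nat \<Rightarrow> nat list \<Rightarrow> bool" where
  "k_monotone k X \<longleftrightarrow> (\<exists>c :: nat \<Rightarrow> nat. (\<forall>t<length X. c t < k) \<and>
     ((\<forall>t s. t < s \<and> s < length X \<and> c t = c s \<longrightarrow> X ! t < X ! s) \<or>
      (\<forall>t s. t < s \<and> s < length X \<and> c t = c s \<longrightarrow> X ! t > X ! s)))"

end

theory Submission
  imports Defs "HOL-Library.Infinite_Set"
begin

text \<open>The witness is the round-robin sequence on k blocks of m consecutive keys whose t-th
  round accesses the t-th key of every block, i.e. position t k + j holds the key j m + t + 1.
  On a path, k fingers that each follow one block pay at most 2 per access.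
  With k - 1 fingers, by pigeonhole every round contains two accesses j1 < j2 served by the same
  finger with no use of it in between, so the access j2 pays the tree distance between the keys
  j1 m + t + 1 and j2 m + t + 1. For a fixed pair (j1, j2), fewer than 2^(D+1) rounds pay at most
  D: the keys of all these rounds lie between the two keys of the round whose lowest common
  ancestor is deepest, hence below that ancestor and within depth D of it, and a binary tree has
  fewer than 2^(D+1) such nodes. For m = k^2 4^q at least half of the m rounds therefore pay q,
  for a total of order (n/k) log(n/k).\<close>

section \<open>Search paths in binary search trees\<close>

lemma lcp_len_commute: "lcp_len xs ys = lcp_len ys xs"
  by (induction xs ys rule: lcp_len.induct) auto

lemma lcp_len_le_length: "lcp_len xs ys \<le> length xs"
  by (induction xs ys rule: lcp_len.induct) auto

lemma lcp_len_append_self: "lcp_len xs (xs @ ys) = length xs"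
  by (induction xs) auto

lemma dist_T_commute: "dist_T T a b = dist_T T b a"
  unfolding dist_T_def by (simp add: lcp_len_commute)

lemma length_spath_le_lcp_len_plus_dist_T:
  "length (spath T a) \<le> lcp_len (spath T a) (spath T b) + dist_T T a b"
  using lcp_len_le_length[of "spath T a" "spath T b"] lcp_len_le_length[of "spath T b" "spath T a"]
  unfolding dist_T_def by (simp add: lcp_len_commute)

lemma bst_onD: "bst_on n T \<Longrightarrow> bst T \<and> set_tree T = {1..n}"
  unfolding bst_on_def
  by (metis atLeastLessThanSuc_atLeastAtMost bst_iff_sorted_wrt_less set_inorder set_upt
      sorted_wrt_upt Suc_eq_plus1)

lemma take_spath_eq_Cons: "take (Suc n) (spath T u) = q # P \<Longrightarrow> \<exists>l r. T = Node l q r"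
  by (cases T) auto

lemma lcp_len_spath_children:
  "bst (Node l c r) \<Longrightarrow> lcp_len (spath l a) (spath r b) = 0"
  by (cases l; cases r) auto

lemma take_lcp_len_spath_between:
  assumes "bst T" "a \<in> set_tree T" "b \<in> set_tree T" "a \<le> u" "u \<le> b"
  shows "take (lcp_len (spath T a) (spath T b)) (spath T u)
       = take (lcp_len (spath T a) (spath T b)) (spath T a)"
  using assms
proof (induction T)
  case Leaf
  then show ?case by simp
next
  case (Node l c r)
  consider "b < c" | "c < a" | "a \<le> c" "c \<le> b"
    by linarith
  then show ?case
  proof cases
    case 1
    have "a < c" "u < c"
      using 1 Node.prems(4,5) by linarith+
    then have "a \<in> set_tree l" "b \<in> set_tree l"
      using 1 Node.prems(1-3) by auto
    moreover have "spath (Node l c r) x = c # spath l x" if "x < c" for x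
      using that by simp
    ultimately show ?thesis
      using Node.IH(1) Node.prems(1,4,5) 1 \<open>a < c\<close> \<open>u < c\<close> by (simp del: spath.simps)
  next
    case 2
    have "c < b" "c < u"
      using 2 Node.prems(4,5) by linarith+
    then have "a \<in> set_tree r" "b \<in> set_tree r"
      using 2 Node.prems(1-3) by auto
    moreover have "spath (Node l c r) x = c # spath r x" if "c < x" for x
      using that by simp
    ultimately show ?thesis
      using Node.IH(2) Node.prems(1,4,5) 2 \<open>c < b\<close> \<open>c < u\<close> by (simp del: spath.simps)
  next
    case 3
    have "lcp_len (spath (Node l c r) a) (spath (Node l c r) b) \<le> 1"
      using 3 lcp_len_spath_children[OF Node.prems(1)] by (cases "a < c"; cases "c < b") auto
    moreover have "take n (c # xs) = take n (c # ys)" if "n \<le> 1" for n and xs ys :: "nat list"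
      using that by (cases n) auto
    ultimately show ?thesis by auto
  qed
qed

lemma card_short_spaths: "bst T \<Longrightarrow> card {u \<in> set_tree T. length (spath T u) \<le> D} < 2 ^ D"
proof (induction T arbitrary: D)
  case Leaf
  then show ?case by simp
next
  case (Node l a r)
  show ?case
  proof (cases D)
    case 0
    then show ?thesis by auto
  next
    case (Suc D')
    let ?L = "{u \<in> set_tree l. length (spath l u) \<le> D'}"
    let ?R = "{u \<in> set_tree r. length (spath r u) \<le> D'}"
    have "{u \<in> set_tree (Node l a r). length (spath (Node l a r) u) \<le> D} \<subseteq> insert a (?L \<union> ?R)"
      using Node.prems Suc by auto
    then have "card {u \<in> set_tree (Node l a r). length (spath (Node l a r) u) \<le> D}
        \<le> card (insert a (?L \<union> ?R))"
      by (intro card_mono) auto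
    also have "\<dots> \<le> Suc (card ?L + card ?R)"
      using card_Un_le[of ?L ?R]
      by (simp add: card_insert_if)
    finally have "card {u \<in> set_tree (Node l a r). length (spath (Node l a r) u) \<le> D}
        \<le> Suc (card ?L + card ?R)" .
    moreover have "card ?L < 2 ^ D'" "card ?R < 2 ^ D'"
      using Node by auto
    ultimately show ?thesis using Suc by simp
  qed
qed

lemma card_spath_prefix:
  assumes "bst T" "length P = L"
  shows "card {u \<in> set_tree T. take L (spath T u) = P \<and> length (spath T u) \<le> L + D} < 2 ^ Suc D"
  using assms
proof (induction T arbitrary: L P)
  case Leaf
  then show ?case by simp
next
  case (Node l a r)
  let ?S = "\<lambda>T L P. {u \<in> set_tree T. take L (spath T u) = P \<and> length (spath T u) \<le> L + D}"
  show ?case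
  proof (cases "L \<le> 1")
    case True
    then have "?S (Node l a r) L P \<subseteq> {u \<in> set_tree (Node l a r). length (spath (Node l a r) u) \<le> Suc D}"
      by auto
    from card_mono[OF _ this] show ?thesis
      using card_short_spaths[OF Node.prems(1), of "Suc D"] by simp
  next
    case False
    then obtain L' p q P' where L: "L = Suc (Suc L')" and P: "P = p # q # P'"
      using Node.prems(2) by (cases P; cases "tl P") (auto simp: not_le)
    let ?L = "?S l (Suc L') (q # P')" and ?R = "?S r (Suc L') (q # P')"
    have "?S (Node l a r) L P \<subseteq> ?L \<union> ?R"
      using Node.prems(1) by (auto simp: L P)
    then have "card (?S (Node l a r) L P) \<le> card (?L \<union> ?R)"
      by (intro card_mono) auto
    moreover have one_side: "?L = {} \<or> ?R = {}"
    proof (rule ccontr)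
      assume "\<not> (?L = {} \<or> ?R = {})"
      then obtain u v where "u \<in> ?L" "v \<in> ?R"
        by blast
      then have "take (Suc L') (spath l u) = q # P'" "take (Suc L') (spath r v) = q # P'"
        by simp_all
      then obtain l1 l2 r1 r2 where "l = Node l1 q l2" "r = Node r1 q r2"
        using take_spath_eq_Cons by metis
      then show False
        using Node.prems(1) by auto
    qed
    moreover have "card ?L < 2 ^ Suc D" "card ?R < 2 ^ Suc D"
      using Node.IH[of "q # P'" "Suc L'"] Node.prems P L by simp_all
    with one_side have "card (?L \<union> ?R) < 2 ^ Suc D"
      by (elim disjE) (simp_all only: Un_empty_left Un_empty_right)
    ultimately show ?thesis
      by linarith
  qed
qed

lemma card_between_near_lca:
  assumes "bst T" "a \<in> set_tree T" "b \<in> set_tree T"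
  shows "card {v \<in> set_tree T. a \<le> v \<and> v \<le> b \<and>
    length (spath T v) \<le> lcp_len (spath T a) (spath T b) + D} < 2 ^ Suc D"
proof -
  let ?L = "lcp_len (spath T a) (spath T b)"
  have "card {v \<in> set_tree T. a \<le> v \<and> v \<le> b \<and> length (spath T v) \<le> ?L + D}
      \<le> card {v \<in> set_tree T. take ?L (spath T v) = take ?L (spath T a) \<and> length (spath T v) \<le> ?L + D}"
    using take_lcp_len_spath_between[OF assms] by (intro card_mono) auto
  also have "\<dots> < 2 ^ Suc D"
    using lcp_len_le_length by (intro card_spath_prefix[OF assms(1)]) (simp add: min_absorb2)
  finally show ?thesis .
qed

lemma card_cheap_pairs:
  fixes x y :: "nat \<Rightarrow> nat"
  assumes "bst T" "finite I"
    and mem: "\<And>t. t \<in> I \<Longrightarrow> x t \<in> set_tree T \<and> y t \<in> set_tree T"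
    and mono: "\<And>s t. s \<in> I \<Longrightarrow> t \<in> I \<Longrightarrow> s < t \<Longrightarrow> x s < x t \<and> y s < y t"
    and sep: "\<And>s t. s \<in> I \<Longrightarrow> t \<in> I \<Longrightarrow> x s < y t"
    and cheap: "\<And>t. t \<in> I \<Longrightarrow> dist_T T (x t) (y t) \<le> D"
  shows "card I < 2 ^ Suc D"
proof (cases "I = {}")
  case True
  then show ?thesis by simp
next
  case False
  define lca_depth where "lca_depth t = lcp_len (spath T (x t)) (spath T (y t))" for t
  obtain t0 where t0: "t0 \<in> I" and deepest: "\<And>t. t \<in> I \<Longrightarrow> lca_depth t \<le> lca_depth t0"
    using Max_in[of "lca_depth ` I"] Max_ge[of "lca_depth ` I"] \<open>finite I\<close> False by fastforce
  define u where "u t = (if t < t0 then y t else x t)" for t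
  have "u s \<noteq> u t" if "s < t" "s \<in> I" "t \<in> I" for s t
    using mono[OF that(2,3,1)] sep[OF that(3,2)] that(1) by (auto simp: u_def)
  then have "inj_on u I"
    by (metis linorder_inj_onI nat_le_linear)
  have "u ` I \<subseteq> {v \<in> set_tree T. x t0 \<le> v \<and> v \<le> y t0 \<and> length (spath T v) \<le> lca_depth t0 + D}"
  proof (intro image_subsetI CollectI conjI)
    fix t assume t: "t \<in> I"
    show "u t \<in> set_tree T"
      using mem[OF t] by (simp add: u_def)
    have "x t0 \<le> u t \<and> u t \<le> y t0"
      using mono[OF t t0] mono[OF t0 t] sep[OF t0 t] sep[OF t t0]
      by (cases t t0 rule: linorder_cases) (auto simp: u_def)
    then show "x t0 \<le> u t" "u t \<le> y t0"
      by simp_all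
    have "length (spath T (x t)) \<le> lca_depth t + D" "length (spath T (y t)) \<le> lca_depth t + D"
      using length_spath_le_lcp_len_plus_dist_T[of T "x t" "y t"]
        length_spath_le_lcp_len_plus_dist_T[of T "y t" "x t"] cheap[OF t]
      by (simp_all add: lca_depth_def lcp_len_commute dist_T_commute)
    then show "length (spath T (u t)) \<le> lca_depth t0 + D"
      using deepest[OF t] by (simp add: u_def)
  qed
  have "card I = card (u ` I)"
    using card_image[OF \<open>inj_on u I\<close>] by simp
  also have "\<dots> \<le> card {v \<in> set_tree T. x t0 \<le> v \<and> v \<le> y t0 \<and> length (spath T v) \<le> lca_depth t0 + D}"
    by (rule card_mono) (simp_all add: \<open>u ` I \<subseteq> _\<close>)
  also have "\<dots> < 2 ^ Suc D"
    unfolding lca_depth_def using mem[OF t0] by (intro card_between_near_lca[OF \<open>bst T\<close>]) simp_all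
  finally show ?thesis .
qed

fun right_spine :: "nat \<Rightarrow> nat \<Rightarrow> nat tree" where
  "right_spine a 0 = Leaf"
| "right_spine a (Suc c) = Node Leaf a (right_spine (Suc a) c)"

lemma inorder_right_spine: "inorder (right_spine a c) = [a..<a + c]"
  by (induction c arbitrary: a) (auto simp: upt_conv_Cons)

lemma spath_right_spine: "a \<le> x \<Longrightarrow> x < a + c \<Longrightarrow> spath (right_spine a c) x = [a..<Suc x]"
  by (induction c arbitrary: a) (auto simp: upt_conv_Cons Suc_le_eq)

lemma dist_T_right_spine:
  assumes "a \<le> x" "x \<le> y" "y < a + c"
  shows "dist_T (right_spine a c) x y = y - x"
proof -
  have x: "spath (right_spine a c) x = [a..<Suc x]"
    using assms by (simp add: spath_right_spine)
  have "spath (right_spine a c) y = [a..<Suc y]"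
    using assms by (simp add: spath_right_spine)
  also have "\<dots> = [a..<Suc x] @ [Suc x..<Suc y]"
    using assms upt_add_eq_append[of a "Suc x" "y - x"] by simp
  finally have y: "spath (right_spine a c) y = [a..<Suc x] @ [Suc x..<Suc y]" .
  show ?thesis
    unfolding dist_T_def x y lcp_len_append_self length_append length_upt using assms by simp
qed

lemma bst_on_right_spine: "bst_on n (right_spine 1 n)"
  by (simp add: bst_on_def inorder_right_spine)

section \<open>Finger strategies\<close>

fun finger_pos :: "(nat \<Rightarrow> nat) \<Rightarrow> nat list \<Rightarrow> nat list \<Rightarrow> nat \<Rightarrow> nat \<Rightarrow> nat" where
  "finger_pos pos xs fs 0 = pos"
| "finger_pos pos (x # xs) (j # fs) (Suc i) = finger_pos (pos(j := x)) xs fs i"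
| "finger_pos pos _ _ (Suc i) = pos"

lemma finger_cost_eq_sum:
  "length fs = length xs \<Longrightarrow>
   finger_cost T pos xs fs = (\<Sum>i<length xs. 1 + dist_T T (xs ! i) (finger_pos pos xs fs i (fs ! i)))"
proof (induction xs arbitrary: pos fs)
  case Nil
  then show ?case by simp
next
  case (Cons x xs)
  then obtain j fs' where "fs = j # fs'" "length fs' = length xs"
    by (cases fs) auto
  with Cons.IH show ?case
    by (simp add: sum.lessThan_Suc_shift del: sum.lessThan_Suc)
qed

lemma finger_pos_unused:
  "length fs = length xs \<Longrightarrow> \<forall>i'<i. fs ! i' \<noteq> j \<Longrightarrow> finger_pos pos xs fs i j = pos j"
proof (induction xs arbitrary: pos fs i)
  case Nil
  then show ?case by (cases i) auto
next
  case (Cons x xs)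
  then obtain j' fs' where "fs = j' # fs'" "length fs' = length xs"
    by (cases fs) auto
  show ?case
  proof (cases i)
    case 0
    then show ?thesis by simp
  next
    case (Suc i1)
    have "j' \<noteq> j"
      using Cons.prems(2)[rule_format, of 0] Suc \<open>fs = j' # fs'\<close> by simp
    moreover have "\<forall>i'<i1. fs' ! i' \<noteq> j"
      using Cons.prems(2) Suc \<open>fs = j' # fs'\<close> by (metis Suc_mono nth_Cons_Suc)
    ultimately show ?thesis
      using Cons.IH \<open>length fs' = length xs\<close> Suc \<open>fs = j' # fs'\<close> by simp
  qed
qed

lemma finger_pos_last_use:
  assumes "length fs = length xs" "i0 < i" "i0 < length xs" "fs ! i0 = j"
    "\<forall>i'. i0 < i' \<and> i' < i \<longrightarrow> fs ! i' \<noteq> j"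
  shows "finger_pos pos xs fs i j = xs ! i0"
  using assms
proof (induction xs arbitrary: pos fs i i0)
  case Nil
  then show ?case by simp
next
  case (Cons x xs)
  obtain j' fs' where fs: "fs = j' # fs'" "length fs' = length xs"
    using Cons.prems(1) by (cases fs) auto
  obtain i1 where i: "i = Suc i1"
    using Cons.prems(2) by (cases i) auto
  show ?case
  proof (cases i0)
    case 0
    have "\<forall>i'<i1. fs' ! i' \<noteq> j"
      using Cons.prems(5) i fs 0 by (metis Suc_mono nth_Cons_Suc zero_less_Suc)
    then show ?thesis
      using finger_pos_unused[OF fs(2)] Cons.prems(4) i fs 0 by simp
  next
    case (Suc i0')
    have "\<forall>i'. i0' < i' \<and> i' < i1 \<longrightarrow> fs' ! i' \<noteq> j"
    proof (intro allI impI)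
      fix i' assume "i0' < i' \<and> i' < i1"
      then show "fs' ! i' \<noteq> j"
        using Cons.prems(5)[rule_format, of "Suc i'"] i fs Suc by simp
    qed
    then have "finger_pos (pos(j' := x)) xs fs' i1 j = xs ! i0'"
      using Cons.IH[OF fs(2)] Cons.prems(2-4) i fs Suc by simp
    then show ?thesis
      using i fs Suc by simp
  qed
qed

lemma finger_le_finger_cost:
  assumes "bst_on n T" "\<forall>i<k. l i \<in> {1..n}" "length f = length X" "set f \<subseteq> {..<k}"
  shows "finger k n X \<le> finger_cost T l X f"
proof -
  have "finger k n X \<le> finger_T k n T X"
    unfolding finger_def using assms(1) by (intro cInf_lower) auto
  also have "\<dots> \<le> finger_cost T l X f"
    unfolding finger_T_def using assms(2-4) by (intro cInf_lower) auto
  finally show ?thesis .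
qed

lemma finger_attained:
  assumes "1 \<le> n" "1 \<le> k"
  obtains T l f where "bst_on n T" "\<forall>i<k. l i \<in> {1..n}" "length f = length X" "set f \<subseteq> {..<k}"
    "finger k n X = finger_cost T l X f"
proof -
  have "finger k n X \<in> {finger_T k n T X | T. bst_on n T}"
    unfolding finger_def using bst_on_right_spine by (intro Inf_nat_def1) blast
  then obtain T where T: "bst_on n T" "finger k n X = finger_T k n T X"
    by blast
  have "finger_cost T (\<lambda>_. 1) X (replicate (length X) 0)
      \<in> {finger_cost T l X f | l f. (\<forall>i<k. l i \<in> {1..n}) \<and> length f = length X \<and> set f \<subseteq> {..<k}}"
    by (rule CollectI, rule exI, rule exI, rule conjI[OF refl])
      (use assms in \<open>auto simp: set_replicate_conv_if\<close>)
  then have "finger_T k n T X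
      \<in> {finger_cost T l X f | l f. (\<forall>i<k. l i \<in> {1..n}) \<and> length f = length X \<and> set f \<subseteq> {..<k}}"
    unfolding finger_T_def by (intro Inf_nat_def1) blast
  then show ?thesis
    using T that by auto
qed

section \<open>The round-robin sequence\<close>

lemma round_index_less: "j < k \<Longrightarrow> t < m \<Longrightarrow> t * k + j < k * (m::nat)"
proof -
  assume "j < k" "t < m"
  then have "t * k + j < Suc t * k" by simp
  also have "\<dots> \<le> m * k" using \<open>t < m\<close> by (intro mult_le_mono1) simp
  finally show ?thesis by (simp add: mult.commute)
qed

lemma round_key_less: "j < k \<Longrightarrow> t < m \<Longrightarrow> j * m + t < k * (m::nat)"
  using round_index_less[of t m j k] by (simp add: mult.commute)

definition round_robin :: "nat \<Rightarrow> nat \<Rightarrow> nat list" where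
  "round_robin k m = map (\<lambda>i. (i mod k) * m + i div k + 1) [0..<k * m]"

lemma length_round_robin [simp]: "length (round_robin k m) = k * m"
  by (simp add: round_robin_def)

lemma nth_round_robin: "i < k * m \<Longrightarrow> round_robin k m ! i = (i mod k) * m + i div k + 1"
  by (simp add: round_robin_def)

lemma nth_round_robin_round: "j < k \<Longrightarrow> t < m \<Longrightarrow> round_robin k m ! (t * k + j) = j * m + t + 1"
  by (simp add: nth_round_robin round_index_less)

lemma round_decomp:
  fixes i k m :: nat
  assumes "i < k * m"
  obtains t j where "i = t * k + j" "t < m" "j < k"
proof
  show "i = i div k * k + i mod k" by simp
  show "i div k < m"
    using assms by (simp add: less_mult_imp_div_less mult.commute)
  show "i mod k < k"
    using assms by (cases k) auto
qed

lemma mod_ne_of_between: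
  fixes i k j t :: nat
  assumes "t * k + j < i" "i < Suc t * k + j"
  shows "i mod k \<noteq> j"
proof
  assume "i mod k = j"
  then have "i = i div k * k + j"
    using div_mult_mod_eq[of i k] by simp
  then have "t * k < i div k * k" "i div k * k < Suc t * k"
    using assms by linarith+
  then have "t < i div k" "i div k < Suc t"
    using mult_right_less_imp_less[of _ k] by blast+
  then show False
    by simp
qed

lemma set_round_robin: "set (round_robin k m) \<subseteq> {1..k * m}"
proof
  fix x assume "x \<in> set (round_robin k m)"
  then obtain i where "i < k * m" "x = round_robin k m ! i"
    by (auto simp: in_set_conv_nth)
  moreover obtain t j where "i = t * k + j" "t < m" "j < k"
    using round_decomp[OF \<open>i < k * m\<close>] .
  ultimately show "x \<in> {1..k * m}"
    using round_key_less[of j k t m] by (simp add: nth_round_robin_round)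
qed

lemma k_monotone_round_robin: "k_monotone k (round_robin k m)"
  unfolding k_monotone_def
proof (intro exI[of _ "\<lambda>t. t mod k"] conjI disjI1 allI impI)
  fix t assume "t < length (round_robin k m)"
  then show "t mod k < k" by (cases k) auto
next
  fix t s assume "t < s \<and> s < length (round_robin k m) \<and> t mod k = s mod k"
  moreover then have "t div k < s div k"
    by (metis div_le_mono div_mod_decomp order_less_le)
  ultimately show "round_robin k m ! t < round_robin k m ! s"
    by (simp add: nth_round_robin)
qed

lemma finger_pos_cyclic:
  assumes "j < k" "t < m"
  shows "finger_pos (\<lambda>j. j * m + 1) (round_robin k m) (map (\<lambda>i. i mod k) [0..<k * m]) (t * k + j) j
    = j * m + max 1 t"
proof -
  let ?f = "map (\<lambda>i. i mod k) [0..<k * m]"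
  have f: "length ?f = length (round_robin k m)" "\<And>i. i < k * m \<Longrightarrow> ?f ! i = i mod k"
    by simp_all
  have "t * k + j < k * m"
    by (rule round_index_less[OF assms])
  show ?thesis
  proof (cases t)
    case 0
    have "\<forall>i'<t * k + j. ?f ! i' \<noteq> j"
    proof (intro allI impI)
      fix i' assume "i' < t * k + j"
      then have "i' < j" "i' < k * m"
        using 0 \<open>t * k + j < k * m\<close> by simp_all
      then show "?f ! i' \<noteq> j"
        using f(2) less_trans[OF \<open>i' < j\<close> assms(1)] by simp
    qed
    then show ?thesis
      using finger_pos_unused[OF f(1)] 0 by simp
  next
    case (Suc t')
    have "\<forall>i'. t' * k + j < i' \<and> i' < t * k + j \<longrightarrow> ?f ! i' \<noteq> j"
    proof (intro allI impI)
      fix i' assume i': "t' * k + j < i' \<and> i' < t * k + j"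
      then have "i' mod k \<noteq> j"
        using mod_ne_of_between[where i = i' and t = t'] Suc by simp
      then show "?f ! i' \<noteq> j"
        using f(2) i' \<open>t * k + j < k * m\<close> by simp
    qed
    moreover have "t' * k + j < k * m"
      using round_index_less[of j k t' m] assms Suc by simp
    ultimately have "finger_pos (\<lambda>j. j * m + 1) (round_robin k m) ?f (t * k + j) j = round_robin k m ! (t' * k + j)"
      using finger_pos_last_use[OF f(1)] f(2) assms Suc by simp
    then show ?thesis
      using nth_round_robin_round[of j k t' m] assms Suc by simp
  qed
qed

lemma finger_round_robin_le:
  assumes "1 \<le> m"
  shows "finger k (k * m) (round_robin k m) \<le> 2 * (k * m)"
proof -
  define S where "S = round_robin k m"
  define l :: "nat \<Rightarrow> nat" where "l = (\<lambda>j. j * m + 1)"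
  define f where "f = map (\<lambda>i. i mod k) [0..<k * m]"
  have "length f = length S" "length S = k * m"
    by (simp_all add: f_def S_def)
  have "dist_T (right_spine 1 (k * m)) (S ! i) (finger_pos l S f i (f ! i)) \<le> 1"
    if "i < k * m" for i
  proof -
    obtain t j where i: "i = t * k + j" "t < m" "j < k"
      using round_decomp[OF \<open>i < k * m\<close>] .
    then have "finger_pos l S f i (f ! i) = j * m + max 1 t" "S ! i = j * m + t + 1"
      using finger_pos_cyclic[OF i(3,2)] nth_round_robin_round[OF i(3,2)] \<open>i < k * m\<close>
      by (simp_all add: l_def f_def S_def)
    then show ?thesis
      using dist_T_commute[of _ "S ! i"] dist_T_right_spine[of 1 "j * m + max 1 t" "j * m + t + 1" "k * m"]
        round_key_less[OF i(3,2)] by simp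
  qed
  then have "finger_cost (right_spine 1 (k * m)) l S f \<le> (\<Sum>i<k * m. 2)"
    unfolding finger_cost_eq_sum[OF \<open>length f = length S\<close>] \<open>length S = k * m\<close>
    by (intro sum_mono) simp
  moreover have "finger k (k * m) S \<le> finger_cost (right_spine 1 (k * m)) l S f"
  proof (rule finger_le_finger_cost[OF bst_on_right_spine _ \<open>length f = length S\<close>])
    show "\<forall>j<k. l j \<in> {1..k * m}"
      using assms by (simp add: l_def Suc_le_eq)
    show "set f \<subseteq> {..<k}"
      by (auto simp: f_def) (metis mod_less_divisor mult_0 not_gr_zero not_less_zero)
  qed
  ultimately show ?thesis
    by (simp add: S_def)
qed

section \<open>Lower bound with k - 1 fingers\<close>

lemma pigeonhole_nearest_repeat:
  assumes "card (g ` {..<k}) < k"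
  obtains j1 j2 where "j1 < j2" "j2 < k" "g j1 = g j2" "\<forall>j. j1 < j \<and> j < j2 \<longrightarrow> g j \<noteq> g j2"
proof -
  have "\<not> inj_on g {..<k}"
    using pigeonhole[of g "{..<k}"] assms by simp
  then obtain a b where "a < k" "b < k" "a \<noteq> b" "g a = g b"
    unfolding inj_on_def by blast
  then obtain a b where "a < b" "b < k" "g a = g b"
    by (metis linorder_neqE_nat)
  define j1 where "j1 = Max {j. j < b \<and> g j = g b}"
  have "j1 \<in> {j. j < b \<and> g j = g b}"
    unfolding j1_def using \<open>a < b\<close> \<open>g a = g b\<close> by (intro Max_in) auto
  moreover have "\<forall>j. j1 < j \<and> j < b \<longrightarrow> g j \<noteq> g b"
  proof (intro allI impI notI)
    fix j assume "j1 < j \<and> j < b" "g j = g b"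
    then have "j \<le> j1"
      unfolding j1_def by (intro Max_ge) auto
    with \<open>j1 < j \<and> j < b\<close> show False
      by simp
  qed
  ultimately show ?thesis
    using that \<open>b < k\<close> by blast
qed

lemma round_finger_collision:
  assumes "1 \<le> k" "length f = k * m" "set f \<subseteq> {..<k - 1}" "t < m"
  obtains j1 j2 where "j1 < j2" "j2 < k" "f ! (t * k + j1) = f ! (t * k + j2)"
    "\<forall>j. j1 < j \<and> j < j2 \<longrightarrow> f ! (t * k + j) \<noteq> f ! (t * k + j2)"
proof (rule pigeonhole_nearest_repeat)
  have "(\<lambda>j. f ! (t * k + j)) ` {..<k} \<subseteq> {..<k - 1}"
    using assms(2-4) round_index_less[of _ k t m] by (auto simp: subset_eq)
  then have "card ((\<lambda>j. f ! (t * k + j)) ` {..<k}) \<le> card {..<k - 1}"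
    by (intro card_mono) simp_all
  then show "card ((\<lambda>j. f ! (t * k + j)) ` {..<k}) < k"
    using assms(1) by simp
qed (rule that)

lemma finger_pos_round_collision:
  assumes "length f = k * m" "t < m" "j1 < j2" "j2 < k" "f ! (t * k + j1) = f ! (t * k + j2)"
    and unused: "\<forall>j. j1 < j \<and> j < j2 \<longrightarrow> f ! (t * k + j) \<noteq> f ! (t * k + j2)"
  shows "finger_pos l (round_robin k m) f (t * k + j2) (f ! (t * k + j2)) = j1 * m + t + 1"
proof -
  have "finger_pos l (round_robin k m) f (t * k + j2) (f ! (t * k + j2)) = round_robin k m ! (t * k + j1)"
  proof (rule finger_pos_last_use)
    show "\<forall>i. t * k + j1 < i \<and> i < t * k + j2 \<longrightarrow> f ! i \<noteq> f ! (t * k + j2)"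
    proof (intro allI impI)
      fix i assume "t * k + j1 < i \<and> i < t * k + j2"
      then have "i = t * k + (i - t * k)" "j1 < i - t * k" "i - t * k < j2"
        by auto
      then show "f ! i \<noteq> f ! (t * k + j2)"
        using unused by metis
    qed
    show "t * k + j1 < length (round_robin k m)"
      using round_index_less[of j1 k t m] assms(2-4) by simp
  qed (use assms in simp_all)
  then show ?thesis
    using assms(2-4) by (simp add: nth_round_robin_round)
qed

lemma finger_cost_round_robin_collisions:
  assumes "1 \<le> k" "length f = k * m" "set f \<subseteq> {..<k - 1}"
  obtains a b where "\<And>t. t < m \<Longrightarrow> a t < b t \<and> b t < k"
    "k * m + (\<Sum>t<m. dist_T T (a t * m + t + 1) (b t * m + t + 1))
       \<le> finger_cost T l (round_robin k m) f"
proof -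
  define S where "S = round_robin k m"
  have lengths: "length f = length S"
    using assms(2) by (simp add: S_def)
  have "\<exists>j1 j2. j1 < j2 \<and> j2 < k \<and> f ! (t * k + j1) = f ! (t * k + j2) \<and>
      (\<forall>j. j1 < j \<and> j < j2 \<longrightarrow> f ! (t * k + j) \<noteq> f ! (t * k + j2))" if "t < m" for t
    by (rule round_finger_collision[OF assms that]) blast
  then obtain a b where ab: "\<And>t. t < m \<Longrightarrow> a t < b t \<and> b t < k \<and>
      f ! (t * k + a t) = f ! (t * k + b t) \<and>
      (\<forall>j. a t < j \<and> j < b t \<longrightarrow> f ! (t * k + j) \<noteq> f ! (t * k + b t))"
    by metis
  define d where "d i = dist_T T (S ! i) (finger_pos l S f i (f ! i))" for i
  have collision_cost: "d (t * k + b t) = dist_T T (a t * m + t + 1) (b t * m + t + 1)" if "t < m" for t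
    using finger_pos_round_collision[OF assms(2) that, of "a t" "b t" l] ab[OF that] that
    by (simp add: d_def S_def nth_round_robin_round dist_T_commute)
  have "inj_on (\<lambda>t. t * k + b t) {..<m}"
  proof (rule inj_onI)
    fix s t assume "s \<in> {..<m}" "t \<in> {..<m}" "s * k + b s = t * k + b t"
    moreover have "(s * k + b s) div k = s" "(t * k + b t) div k = t"
      using ab[of s] ab[of t] \<open>s \<in> {..<m}\<close> \<open>t \<in> {..<m}\<close> by auto
    ultimately show "s = t"
      by metis
  qed
  then have "(\<Sum>t<m. dist_T T (a t * m + t + 1) (b t * m + t + 1)) = (\<Sum>i\<in>(\<lambda>t. t * k + b t) ` {..<m}. d i)"
    by (simp add: sum.reindex collision_cost)
  also have "\<dots> \<le> (\<Sum>i<k * m. d i)"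
    using ab round_index_less[of _ k _ m] by (intro sum_mono2) auto
  finally have collisions: "(\<Sum>t<m. dist_T T (a t * m + t + 1) (b t * m + t + 1)) \<le> (\<Sum>i<k * m. d i)" .
  have "finger_cost T l S f = (\<Sum>i<k * m. 1 + d i)"
    using finger_cost_eq_sum[OF lengths] by (simp add: d_def S_def)
  also have "\<dots> = k * m + (\<Sum>i<k * m. d i)"
    by (simp only: sum.distrib) simp
  finally show ?thesis
    using collisions ab unfolding S_def by (intro that[of a b]) auto
qed

lemma card_cheap_block_pair:
  assumes "bst_on (k * m) T" "i < j" "j < k" "I \<subseteq> {..<m}"
    and cheap: "\<And>t. t \<in> I \<Longrightarrow> dist_T T (i * m + t + 1) (j * m + t + 1) < q"
  shows "card I < 2 ^ q"
proof (cases q)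
  case 0
  then have "I = {}"
    using cheap by auto
  then show ?thesis
    by simp
next
  case (Suc D)
  have "bst T" "set_tree T = {1..k * m}"
    using bst_onD[OF assms(1)] by simp_all
  have "card I < 2 ^ Suc D"
  proof (rule card_cheap_pairs[OF \<open>bst T\<close>, where x = "\<lambda>t. i * m + t + 1" and y = "\<lambda>t. j * m + t + 1"])
    show "i * m + t + 1 \<in> set_tree T \<and> j * m + t + 1 \<in> set_tree T" if "t \<in> I" for t
      using that assms(2-4) round_key_less[of i k t m] round_key_less[of j k t m]
        \<open>set_tree T = {1..k * m}\<close> by auto
    show "i * m + s + 1 < j * m + t + 1" if "s \<in> I" for s t
    proof -
      have "i * m + s < Suc i * m"
        using that assms(4) by auto
      also have "\<dots> \<le> j * m"
        using assms(2) by (intro mult_le_mono1) simp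
      finally show ?thesis by simp
    qed
    show "dist_T T (i * m + t + 1) (j * m + t + 1) \<le> D" if "t \<in> I" for t
      using cheap[OF that] Suc by simp
  qed (use assms(4) finite_subset in auto)
  then show ?thesis
    using Suc by simp
qed

lemma card_cheap_rounds:
  assumes "bst_on (k * m) T" "\<And>t. t < m \<Longrightarrow> a t < b t \<and> b t < k"
  shows "card {t. t < m \<and> dist_T T (a t * m + t + 1) (b t * m + t + 1) < q} \<le> k * k * 2 ^ q"
proof -
  define B where "B p = {t. t < m \<and> (a t, b t) = p \<and> dist_T T (a t * m + t + 1) (b t * m + t + 1) < q}" for p
  have "card (B p) \<le> 2 ^ q" if "p \<in> {..<k} \<times> {..<k}" for p
  proof (cases "fst p < snd p")
    case True
    have "card (B p) < 2 ^ q"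
      using that by (intro card_cheap_block_pair[OF assms(1) True]) (auto simp: B_def)
    then show ?thesis
      by simp
  next
    case False
    then have "B p = {}"
      using assms(2) by (auto simp: B_def)
    then show ?thesis
      by simp
  qed
  have "{t. t < m \<and> dist_T T (a t * m + t + 1) (b t * m + t + 1) < q} \<subseteq> (\<Union>p\<in>{..<k} \<times> {..<k}. B p)"
  proof
    fix t assume t: "t \<in> {t. t < m \<and> dist_T T (a t * m + t + 1) (b t * m + t + 1) < q}"
    then have "a t < k" "b t < k"
      using assms(2)[of t] by auto
    with t show "t \<in> (\<Union>p\<in>{..<k} \<times> {..<k}. B p)"
      by (auto simp: B_def)
  qed
  then have "card {t. t < m \<and> dist_T T (a t * m + t + 1) (b t * m + t + 1) < q}
      \<le> card (\<Union>p\<in>{..<k} \<times> {..<k}. B p)"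
    by (intro card_mono) (auto simp: B_def)
  also have "\<dots> \<le> (\<Sum>p\<in>{..<k} \<times> {..<k}. card (B p))"
    by (rule card_UN_le) simp
  also have "\<dots> \<le> (\<Sum>p\<in>{..<k} \<times> {..<k}. 2 ^ q)"
    by (intro sum_mono) fact
  finally show ?thesis
    by simp
qed

lemma finger_cost_round_robin_ge:
  assumes "1 \<le> k" "bst_on (k * m) T" "length f = k * m" "set f \<subseteq> {..<k - 1}"
    and "2 * (k * k * 2 ^ q) \<le> m"
  shows "2 * (k * m) + q * m \<le> 2 * finger_cost T l (round_robin k m) f"
proof -
  obtain a b where ab: "\<And>t. t < m \<Longrightarrow> a t < b t \<and> b t < k"
    and cost: "k * m + (\<Sum>t<m. dist_T T (a t * m + t + 1) (b t * m + t + 1))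
       \<le> finger_cost T l (round_robin k m) f"
    using finger_cost_round_robin_collisions[OF assms(1,3,4), where T = T and l = l] by blast
  define \<delta> where "\<delta> t = dist_T T (a t * m + t + 1) (b t * m + t + 1)" for t
  define cheap where "cheap = {t. t < m \<and> \<delta> t < q}"
  define costly where "costly = {t. t < m \<and> q \<le> \<delta> t}"
  have "card cheap \<le> k * k * 2 ^ q"
    unfolding cheap_def \<delta>_def using card_cheap_rounds[OF assms(2) ab] .
  moreover have "card cheap + card costly = m"
  proof -
    have "cheap \<union> costly = {..<m}" "cheap \<inter> costly = {}"
      by (auto simp: cheap_def costly_def)
    then show ?thesis
      using card_Un_disjoint[of cheap costly] by (simp add: cheap_def costly_def)
  qed
  ultimately have "m \<le> 2 * card costly"
    using assms(5) by linarith
  then have "q * m \<le> 2 * (q * card costly)"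
    by (metis mult.left_commute mult_le_mono2)
  also have "q * card costly = (\<Sum>t\<in>costly. q)"
    by simp
  also have "\<dots> \<le> (\<Sum>t\<in>costly. \<delta> t)"
    by (rule sum_mono) (simp add: costly_def)
  also have "\<dots> \<le> (\<Sum>t<m. \<delta> t)"
    by (rule sum_mono2) (auto simp: costly_def)
  finally show ?thesis
    using cost unfolding \<delta>_def by linarith
qed

lemma finger_round_robin_ge:
  assumes "2 \<le> k" "2 * (k * k * 2 ^ q) \<le> m"
  shows "2 * (k * m) + q * m \<le> 2 * finger (k - 1) (k * m) (round_robin k m)"
proof -
  have "0 < k * k * 2 ^ q"
    using assms(1) by simp
  then have "0 < m"
    using assms(2) by linarith
  then have "1 \<le> k * m"
    using assms(1) by simp
  moreover have "1 \<le> k - 1"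
    using assms(1) by simp
  ultimately obtain T l f where "bst_on (k * m) T" "\<forall>i<k - 1. l i \<in> {1..k * m}"
    "length f = length (round_robin k m)" "set f \<subseteq> {..<k - 1}"
    "finger (k - 1) (k * m) (round_robin k m) = finger_cost T l (round_robin k m) f"
    by (rule finger_attained)
  then show ?thesis
    using finger_cost_round_robin_ge[of k m T f q l] assms by simp
qed

lemma two_mul_two_power_le_four_power: "1 \<le> q \<Longrightarrow> 2 * 2 ^ q \<le> (4::nat) ^ q"
proof -
  assume "1 \<le> q"
  then have "(2::nat) ^ 1 \<le> 2 ^ q"
    by (rule power_increasing) simp
  moreover have "(4::nat) ^ q = 2 ^ q * 2 ^ q"
    by (simp flip: power_mult_distrib)
  ultimately show ?thesis
    by simp
qed

lemma lg_square_four_power_le: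
  assumes "1 \<le> k" "1 \<le> q"
  shows "lg (real (k\<^sup>2 * 4 ^ q)) \<le> 2 * real k + 2 * real q"
proof -
  have "2 * 1 \<le> 2 * 2 ^ q * k\<^sup>2"
    using assms by (intro mult_le_mono) auto
  also have "\<dots> \<le> 4 ^ q * k\<^sup>2"
    using two_mul_two_power_le_four_power[OF assms(2)] by simp
  finally have "real 2 \<le> real (k\<^sup>2 * 4 ^ q)"
    by (simp only: of_nat_le_iff mult.commute)
  then have "lg (real (k\<^sup>2 * 4 ^ q)) = log 2 (real k ^ 2 * 4 ^ q)"
    by (simp add: lg_def)
  also have "\<dots> = 2 * log 2 (real k) + 2 * real q"
    using assms(1) log_nat_power[of 2 2 2] by (simp add: log_mult log_nat_power)
  also have "\<dots> \<le> 2 * real k + 2 * real q"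
    using log2_of_power_less[OF less_exp, of k] assms(1) by simp
  finally show ?thesis .
qed

lemma round_robin_witness:
  assumes "2 \<le> k" "1 \<le> q"
  defines "n \<equiv> k * (k\<^sup>2 * 4 ^ q)"
  shows "\<exists>S. length S = n \<and> set S \<subseteq> {1..n} \<and> k_monotone k S \<and>
    1 / 8 * (real n / real k) * lg (real n / real k) \<le> real (finger (k - 1) n S) \<and>
    real (finger k n S) \<le> 2 * real n"
proof (intro exI conjI)
  define m where "m = k\<^sup>2 * 4 ^ q"
  have n: "n = k * m" and "real n / real k = real m"
    using assms(1) by (simp_all add: n_def m_def)
  show "length (round_robin k m) = n" "set (round_robin k m) \<subseteq> {1..n}"
    "k_monotone k (round_robin k m)"
    using set_round_robin k_monotone_round_robin by (simp_all add: n)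
  have "k * k * (2 * 2 ^ q) \<le> k * k * 4 ^ q"
    using two_mul_two_power_le_four_power[OF assms(2)] by (rule mult_le_mono2)
  then have "2 * (k * k * 2 ^ q) \<le> m"
    by (simp add: m_def power2_eq_square algebra_simps)
  then have "real (2 * (k * m) + q * m) \<le> real (2 * finger (k - 1) n (round_robin k m))"
    unfolding of_nat_le_iff n using finger_round_robin_ge[OF assms(1)] by simp
  then have F: "real k * real m + real q * real m / 2 \<le> real (finger (k - 1) n (round_robin k m))"
    by simp
  have "1 / 8 * real m * lg (real m) \<le> 1 / 8 * real m * (2 * real k + 2 * real q)"
    using lg_square_four_power_le[of k q] assms(1,2) by (simp add: m_def)
  also have "\<dots> = real k * real m / 4 + real q * real m / 4"
    by (simp add: algebra_simps)
  also have "\<dots> \<le> real (finger (k - 1) n (round_robin k m))"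
    using F mult_nonneg_nonneg[of "real k" "real m"] mult_nonneg_nonneg[of "real q" "real m"] by linarith
  finally show "1 / 8 * (real n / real k) * lg (real n / real k) \<le> real (finger (k - 1) n (round_robin k m))"
    using \<open>real n / real k = real m\<close> by simp
  have "1 \<le> m"
    using assms(1) by (simp add: m_def)
  then have "finger k n (round_robin k m) \<le> 2 * n"
    using finger_round_robin_le[of m k] by (simp add: n)
  then have "real (finger k n (round_robin k m)) \<le> real (2 * n)"
    by (simp only: of_nat_le_iff)
  then show "real (finger k n (round_robin k m)) \<le> 2 * real n"
    by simp
qed

lemma infinite_round_robin_lengths:
  assumes "2 \<le> k"
  shows "infinite {n::nat. \<exists>S :: nat list. length S = n \<and> set S \<subseteq> {1..n} \<and> k_monotone k S \<and>
    1 / 8 * (real n / real k) * lg (real n / real k) \<le> real (finger (k - 1) n S) \<and>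
    real (finger k n S) \<le> 2 * real n}"
  unfolding infinite_nat_iff_unbounded_le mem_Collect_eq
proof
  fix N
  have "N < 2 ^ N"
    by (rule less_exp)
  also have "\<dots> \<le> 4 ^ N"
    by (rule power_mono) simp_all
  also have "\<dots> \<le> 4 ^ Suc N"
    by simp
  also have "\<dots> \<le> k * (k\<^sup>2 * 4 ^ Suc N)"
    using assms by simp
  finally have "N \<le> k * (k\<^sup>2 * 4 ^ Suc N)"
    by simp
  moreover have "1 \<le> Suc N"
    by simp
  note round_robin_witness[OF assms this]
  ultimately show "\<exists>n\<ge>N. \<exists>S. length S = n \<and> set S \<subseteq> {1..n} \<and> k_monotone k S \<and>
      1 / 8 * (real n / real k) * lg (real n / real k) \<le> real (finger (k - 1) n S) \<and>
      real (finger k n S) \<le> 2 * real n"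
    by blast
qed

theorem theorem12:
  shows "\<exists>c C :: real. c > 0 \<and> C > 0 \<and>
    (\<forall>k::nat. k \<ge> 2 \<longrightarrow>
      infinite {n::nat. \<exists>S :: nat list. length S = n \<and> set S \<subseteq> {1..n} \<and> k_monotone k S \<and>
         real (finger (k - 1) n S) \<ge> c * (real n / real k) * lg (real n / real k) \<and>
         real (finger k n S) \<le> C * real n})"
  by (rule exI[of _ "1 / 8"], rule exI[of _ 2], intro conjI allI impI)
    (simp, simp, erule infinite_round_robin_lengths)

end
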